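(* (1) If $(\mathsf P,\mathcal O)$ is a semitopology that is Hausdorff and in which every point is quasiregular, then $\mathcal O=\mathcal P(\mathsf P)$. (2) There exists a semitopology that is $T_1$, in which every point is regular (hence quasiregular), and whose set of opens is not the full powerset.
   Context: A semitopology is a pair $(\mathsf P,\mathcal O)$ where $\mathsf P$ is a set and $\mathcal O\subseteq\mathcal P(\mathsf P)$ contains $\varnothing$ and $\mathsf P$ and is closed under arbitrary unions. It is Hausdorff when any two distinct points have disjoint open neighbourhoods, and $T_1$ when for distinct $p_1,p_2$ there are opens $O_1,O_2$ with $p_i\in O_j$ iff $i=j$. Points $p,p'$ are intertwined when every open set containing $p$ intersects every open set containing $p'$; $I(p)$ is the set of points intertwined with $p$; $K(p)=\mathrm{int}(I(p))$ where $\mathrm{int}(R)$ is the union of all open subsets of $R$. $p$ is quasiregular when $K(p)\neq\varnothing$. A set $T$ is topen when it is nonempty, open, and for all open $O,O'$ with $O\cap T\neq\varnothing\neq T\cap O'$ we have $O\cap O'\neq\varnothing$; $p$ is regular when $p\in K(p)$ and $K(p)$ is topen. *)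

theory Defs
  imports Main
begin

definition semitopology :: "'a set \<Rightarrow> 'a set set \<Rightarrow> bool" where
  "semitopology P Op \<longleftrightarrow> Op \<subseteq> Pow P \<and> {} \<in> Op \<and> P \<in> Op \<and>
     (\<forall>X. X \<subseteq> Op \<longrightarrow> \<Union>X \<in> Op)"

definition hausdorff :: "'a set \<Rightarrow> 'a set set \<Rightarrow> bool" where
  "hausdorff P Op \<longleftrightarrow> (\<forall>p1\<in>P. \<forall>p2\<in>P. p1 \<noteq> p2 \<longrightarrow>
     (\<exists>O1\<in>Op. \<exists>O2\<in>Op. p1 \<in> O1 \<and> p2 \<in> O2 \<and> O1 \<inter> O2 = {}))"

definition T1 :: "'a set \<Rightarrow> 'a set set \<Rightarrow> bool" where
  "T1 P Op \<longleftrightarrow> (\<forall>p1\<in>P. \<forall>p2\<in>P. p1 \<noteq> p2 \<longrightarrow>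
     (\<exists>O1\<in>Op. \<exists>O2\<in>Op. p1 \<in> O1 \<and> p2 \<notin> O1 \<and> p2 \<in> O2 \<and> p1 \<notin> O2))"

definition intertwined :: "'a set set \<Rightarrow> 'a \<Rightarrow> 'a \<Rightarrow> bool" where
  "intertwined Op p p' \<longleftrightarrow> (\<forall>U\<in>Op. \<forall>V\<in>Op. p \<in> U \<longrightarrow> p' \<in> V \<longrightarrow> U \<inter> V \<noteq> {})"

definition intertwined_set :: "'a set \<Rightarrow> 'a set set \<Rightarrow> 'a \<Rightarrow> 'a set" where
  "intertwined_set P Op p = {p' \<in> P. intertwined Op p p'}"

definition sinterior :: "'a set set \<Rightarrow> 'a set \<Rightarrow> 'a set" where
  "sinterior Op R = \<Union>{U \<in> Op. U \<subseteq> R}"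

definition community :: "'a set \<Rightarrow> 'a set set \<Rightarrow> 'a \<Rightarrow> 'a set" where
  "community P Op p = sinterior Op (intertwined_set P Op p)"

definition quasiregular :: "'a set \<Rightarrow> 'a set set \<Rightarrow> 'a \<Rightarrow> bool" where
  "quasiregular P Op p \<longleftrightarrow> community P Op p \<noteq> {}"

definition topen :: "'a set set \<Rightarrow> 'a set \<Rightarrow> bool" where
  "topen Op T \<longleftrightarrow> T \<noteq> {} \<and> T \<in> Op \<and>
     (\<forall>U\<in>Op. \<forall>V\<in>Op. U \<inter> T \<noteq> {} \<longrightarrow> T \<inter> V \<noteq> {} \<longrightarrow> U \<inter> V \<noteq> {})"

definition regular :: "'a set \<Rightarrow> 'a set set \<Rightarrow> 'a \<Rightarrow> bool" where
  "regular P Op p \<longleftrightarrow> p \<in> community P Op p \<and> topen Op (community P Op p)"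

end

theory Submission
  imports Defs
begin

text \<open>In a Hausdorff semitopology a point is intertwined only with itself, so a nonempty open
  inside its intertwined set, which quasiregularity provides, is the singleton of the point.
  All singletons being open, every subset is open as a union of singletons. Conversely, on a
  three-point set the non-singleton subsets form a semitopology: it is \<open>T\<^sub>1\<close> because any two
  points have a third point to pair with, and any two nonempty opens have at least two points
  each and hence meet, which makes the whole space a topen community of every point.\<close>

lemma hausdorff_intertwined_set_subset:
  assumes "hausdorff P Op" "p \<in> P"
  shows "intertwined_set P Op p \<subseteq> {p}"
proof
  fix x assume x: "x \<in> intertwined_set P Op p"
  show "x \<in> {p}"
  proof (rule ccontr)
    assume "x \<notin> {p}"
    moreover have "x \<in> P" using x by (simp add: intertwined_set_def)
    ultimately obtain U V where "U \<in> Op" "V \<in> Op" "p \<in> U" "x \<in> V" "U \<inter> V = {}"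
      using assms unfolding hausdorff_def by (metis singletonI)
    with x show False unfolding intertwined_set_def intertwined_def by blast
  qed
qed

lemma hausdorff_quasiregular_singleton_open:
  assumes "hausdorff P Op" "p \<in> P" "quasiregular P Op p"
  shows "{p} \<in> Op"
proof -
  obtain U where U: "U \<in> Op" "U \<subseteq> intertwined_set P Op p" "U \<noteq> {}"
    using assms(3) unfolding quasiregular_def community_def sinterior_def by auto
  with hausdorff_intertwined_set_subset[OF assms(1,2)] have "U = {p}" by blast
  with U show ?thesis by simp
qed

lemma semitopology_singletons_open_imp_discrete:
  assumes "semitopology P Op" "\<And>p. p \<in> P \<Longrightarrow> {p} \<in> Op"
  shows "Op = Pow P"
proof
  show "Op \<subseteq> Pow P" using assms(1) by (simp add: semitopology_def)
  show "Pow P \<subseteq> Op"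
  proof
    fix S assume "S \<in> Pow P"
    then have "(\<lambda>p. {p}) ` S \<subseteq> Op" using assms(2) by auto
    then have "\<Union>((\<lambda>p. {p}) ` S) \<in> Op" using assms(1) unfolding semitopology_def by blast
    then show "S \<in> Op" by simp
  qed
qed

theorem hausdorff_quasiregular_discrete:
  assumes "semitopology P Op" "hausdorff P Op" "\<forall>p\<in>P. quasiregular P Op p"
  shows "Op = Pow P"
  using assms(1) proof (rule semitopology_singletons_open_imp_discrete)
  show "{p} \<in> Op" if "p \<in> P" for p
    using assms(2,3) that by (blast intro: hausdorff_quasiregular_singleton_open)
qed

lemma regular_if_opens_pairwise_meet:
  assumes "P \<in> Op" "P \<noteq> {}" "Op \<subseteq> Pow P"
    and meet: "\<And>U V. U \<in> Op \<Longrightarrow> V \<in> Op \<Longrightarrow> U \<noteq> {} \<Longrightarrow> V \<noteq> {} \<Longrightarrow> U \<inter> V \<noteq> {}"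
    and "p \<in> P"
  shows "regular P Op p"
proof -
  have "intertwined_set P Op p = P"
    using meet \<open>p \<in> P\<close> unfolding intertwined_set_def intertwined_def by blast
  then have "community P Op p = P"
    using assms(1,3) unfolding community_def sinterior_def by blast
  moreover have "topen Op P"
    using assms(1,2) meet unfolding topen_def by blast
  ultimately show ?thesis using \<open>p \<in> P\<close> by (simp add: regular_def)
qed

definition nonsingleton_subsets :: "'a set \<Rightarrow> 'a set set" where
  "nonsingleton_subsets P = {U. U \<subseteq> P \<and> (\<forall>a. U \<noteq> {a})}"

lemma semitopology_nonsingleton_subsets:
  assumes "\<And>a. P \<noteq> {a}"
  shows "semitopology P (nonsingleton_subsets P)"
  unfolding semitopology_def nonsingleton_subsets_def
proof (intro conjI allI impI)
  fix X assume X: "X \<subseteq> {U. U \<subseteq> P \<and> (\<forall>a. U \<noteq> {a})}"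
  have "\<Union>X \<noteq> {a}" for a
  proof
    assume a: "\<Union>X = {a}"
    then obtain Y where "Y \<in> X" "a \<in> Y" by blast
    moreover from this a have "Y \<subseteq> {a}" by blast
    ultimately have "{a} \<in> X" by (metis subset_singletonD empty_iff)
    with X show False by auto
  qed
  with X show "\<Union>X \<in> {U. U \<subseteq> P \<and> (\<forall>a. U \<noteq> {a})}" by auto
qed (use assms in auto)

lemma T1_nonsingleton_subsets:
  assumes "3 \<le> card P"
  shows "T1 P (nonsingleton_subsets P)"
  unfolding T1_def
proof (intro ballI impI)
  fix p q assume pq: "p \<in> P" "q \<in> P" "p \<noteq> q"
  have "card {p, q} < card P" using pq(3) assms by simp
  then have "\<not> P \<subseteq> {p, q}" by (metis card_mono finite.emptyI finite.insertI not_less)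
  then obtain r where r: "r \<in> P" "r \<noteq> p" "r \<noteq> q" by blast
  have "{p, r} \<in> nonsingleton_subsets P" "{q, r} \<in> nonsingleton_subsets P"
    using pq r unfolding nonsingleton_subsets_def by (auto simp: doubleton_eq_iff)
  moreover have "p \<in> {p, r} \<and> q \<notin> {p, r} \<and> q \<in> {q, r} \<and> p \<notin> {q, r}"
    using pq(3) r by simp
  ultimately show "\<exists>U\<in>nonsingleton_subsets P. \<exists>V\<in>nonsingleton_subsets P.
      p \<in> U \<and> q \<notin> U \<and> q \<in> V \<and> p \<notin> V"
    by (intro bexI[of _ "{p, r}"] bexI[of _ "{q, r}"])
qed

lemma two_le_card_if_nonsingleton:
  assumes "finite U" "U \<noteq> {}" "\<forall>a. U \<noteq> {a}"
  shows "2 \<le> card U"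
proof -
  have "card U \<noteq> 0" "card U \<noteq> 1"
    using assms by (auto simp: card_1_singleton_iff)
  then show ?thesis by linarith
qed

lemma nonsingleton_subsets_meet:
  assumes "card P = 3" "U \<in> nonsingleton_subsets P" "V \<in> nonsingleton_subsets P"
    and "U \<noteq> {}" "V \<noteq> {}"
  shows "U \<inter> V \<noteq> {}"
proof
  assume disjoint: "U \<inter> V = {}"
  have "finite P" using assms(1) by (simp add: card_ge_0_finite)
  have UV: "U \<subseteq> P" "V \<subseteq> P" "\<forall>a. U \<noteq> {a}" "\<forall>a. V \<noteq> {a}"
    using assms(2,3) by (auto simp: nonsingleton_subsets_def)
  with \<open>finite P\<close> have fin: "finite U" "finite V" by (auto intro: finite_subset)
  with UV assms(4,5) have "2 \<le> card U" "2 \<le> card V"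
    by (simp_all add: two_le_card_if_nonsingleton)
  moreover have "card U + card V = card (U \<union> V)"
    using fin disjoint by (simp add: card_Un_disjoint)
  moreover have "card (U \<union> V) \<le> card P"
    using UV \<open>finite P\<close> by (intro card_mono) auto
  ultimately show False using assms(1) by linarith
qed

lemma regular_nonsingleton_subsets:
  assumes "card P = 3" "p \<in> P"
  shows "regular P (nonsingleton_subsets P) p"
proof (rule regular_if_opens_pairwise_meet)
  have "P \<noteq> {a}" for a
    using assms(1) by auto
  then show "P \<in> nonsingleton_subsets P" by (simp add: nonsingleton_subsets_def)
  show "P \<noteq> {}" using assms(2) by blast
  show "nonsingleton_subsets P \<subseteq> Pow P" by (auto simp: nonsingleton_subsets_def)
  show "U \<inter> V \<noteq> {}" if "U \<in> nonsingleton_subsets P" "V \<in> nonsingleton_subsets P"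
    "U \<noteq> {}" "V \<noteq> {}" for U V
    using nonsingleton_subsets_meet[OF assms(1) that] .
qed (rule assms(2))

lemma nonsingleton_subsets_not_discrete:
  assumes "P \<noteq> {}"
  shows "nonsingleton_subsets P \<noteq> Pow P"
proof -
  obtain a where "a \<in> P" using assms by blast
  then have "{a} \<in> Pow P - nonsingleton_subsets P" by (simp add: nonsingleton_subsets_def)
  then show ?thesis by blast
qed

theorem lemma4p8:
  shows "(\<forall>(P :: 'a set) (Op :: 'a set set).
            semitopology P Op \<and> hausdorff P Op \<and> (\<forall>p\<in>P. quasiregular P Op p)
            \<longrightarrow> Op = Pow P)
       \<and> (\<exists>(P :: nat set) (Op :: nat set set).
            semitopology P Op \<and> T1 P Op \<and> (\<forall>p\<in>P. regular P Op p) \<and> Op \<noteq> Pow P)"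
proof (intro conjI)
  show "\<forall>(P :: 'a set) Op. semitopology P Op \<and> hausdorff P Op \<and> (\<forall>p\<in>P. quasiregular P Op p)
      \<longrightarrow> Op = Pow P"
    using hausdorff_quasiregular_discrete by blast
  let ?P = "{0, 1, 2 :: nat}"
  have three: "card ?P = 3" by simp
  have "semitopology ?P (nonsingleton_subsets ?P)"
    by (rule semitopology_nonsingleton_subsets) auto
  moreover have "T1 ?P (nonsingleton_subsets ?P)"
    using three by (intro T1_nonsingleton_subsets) simp
  moreover have "\<forall>p\<in>?P. regular ?P (nonsingleton_subsets ?P) p"
    using regular_nonsingleton_subsets[OF three] by blast
  moreover have "nonsingleton_subsets ?P \<noteq> Pow ?P"
    by (rule nonsingleton_subsets_not_discrete) simp
  ultimately show "\<exists>(P :: nat set) Op.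
      semitopology P Op \<and> T1 P Op \<and> (\<forall>p\<in>P. regular P Op p) \<and> Op \<noteq> Pow P"
    by (intro exI[of _ ?P] exI[of _ "nonsingleton_subsets ?P"]) simp
qed

end
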